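(* Let $[X,d,m]$ be an $m$-connected metric random walk space with invariant and reversible probability measure $\nu$. If $-\Delta_m$, as an operator on $H(X,\nu)$, is the sum of an invertible operator and a compact operator, then ${\rm gap}(-\Delta_m)>0$.
   Context: A metric random walk space $[X,d,m]$ is a Polish metric space $(X,d)$ with a family $m=(m_x)_{x\in X}$ of Borel probability measures, $x\mapsto m_x(A)$ Borel measurable, each with finite first moment. A Radon measure $\nu$ is invariant if $\nu(A)=\int_X m_x(A)d\nu(x)$ for all $\nu$-measurable $A$, reversible if $dm_x(y)d\nu(x)=dm_y(x)d\nu(y)$. Iterates $m_x^{*1}=m_x$, $m_x^{*n}(A)=\int_X m_z(A)dm_x^{*(n-1)}(z)$; the space is $m$-connected if $\nu(\{x: m_x^{*n}(D)=0\ \forall n\})=0$ for every $\nu$-measurable $D$ with $0<\nu(D)<\infty$. $\Delta_m f(x)=\int_X(f(y)-f(x))dm_x(y)$ (a bounded operator on $L^2(X,\nu)$ here). $H(X,\nu)=\{f\in L^2(X,\nu):\int_X f\,d\nu=0\}$, which is invariant under $\Delta_m$. With $\mathcal H_m(f)=\frac12\iint(f(y)-f(x))^2dm_x(y)d\nu(x)$ and ${\rm Var}_\nu(f)=\int_X(f-\int f d\nu)^2d\nu$, the spectral gap is ${\rm gap}(-\Delta_m)=\inf\{\mathcal H_m(f)/{\rm Var}_\nu(f): f\in L^2(X,\nu),\ {\rm Var}_\nu(f)\neq0\}$. *)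

theory Defs
  imports "HOL-Probability.Probability"
begin

text \<open>Metric random walk space: (X,d) Polish (type class polish_space, d = dist),
  each m x a Borel probability measure with finite first moment, and x |-> m x A
  Borel measurable for every Borel set A.\<close>
definition mrw_space :: "('a::polish_space \<Rightarrow> 'a measure) \<Rightarrow> bool" where
  "mrw_space m \<longleftrightarrow>
     (\<forall>x. prob_space (m x) \<and> sets (m x) = sets borel \<and> integrable (m x) (\<lambda>y. dist x y)) \<and>
     (\<forall>A\<in>sets borel. (\<lambda>x. emeasure (m x) A) \<in> borel_measurable borel)"

definition invariant_measure :: "('a::polish_space \<Rightarrow> 'a measure) \<Rightarrow> 'a measure \<Rightarrow> bool" where
  "invariant_measure m \<nu> \<longleftrightarrow>
     (\<forall>A\<in>sets borel. emeasure \<nu> A = (\<integral>\<^sup>+x. emeasure (m x) A \<partial>\<nu>))"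

text \<open>Reversibility: the measures dm_x(y) d nu(x) and dm_y(x) d nu(y) on X x X coincide.\<close>
definition reversible_measure :: "('a::polish_space \<Rightarrow> 'a measure) \<Rightarrow> 'a measure \<Rightarrow> bool" where
  "reversible_measure m \<nu> \<longleftrightarrow>
     (\<forall>C\<in>sets (borel \<Otimes>\<^sub>M borel).
        (\<integral>\<^sup>+x. emeasure (m x) {y. (x, y) \<in> C} \<partial>\<nu>) = (\<integral>\<^sup>+x. emeasure (m x) {y. (y, x) \<in> C} \<partial>\<nu>))"

text \<open>Iterates: m_iter m n x is the (n+1)-st iterate m_x^{*(n+1)}.\<close>
fun m_iter :: "('a::polish_space \<Rightarrow> 'a measure) \<Rightarrow> nat \<Rightarrow> 'a \<Rightarrow> 'a measure" where
  "m_iter m 0 x = m x"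
| "m_iter m (Suc n) x =
     measure_of UNIV (sets borel) (\<lambda>A. \<integral>\<^sup>+z. emeasure (m z) A \<partial>(m_iter m n x))"

definition m_connected :: "('a::polish_space \<Rightarrow> 'a measure) \<Rightarrow> 'a measure \<Rightarrow> bool" where
  "m_connected m \<nu> \<longleftrightarrow>
     (\<forall>D\<in>sets borel. 0 < emeasure \<nu> D \<and> emeasure \<nu> D < \<infinity> \<longrightarrow>
        emeasure \<nu> {x. \<forall>n. emeasure (m_iter m n x) D = 0} = 0)"

definition laplacian :: "('a::polish_space \<Rightarrow> 'a measure) \<Rightarrow> ('a \<Rightarrow> real) \<Rightarrow> 'a \<Rightarrow> real" where
  "laplacian m f x = (\<integral>y. (f y - f x) \<partial>(m x))"

definition L2 :: "'a measure \<Rightarrow> ('a \<Rightarrow> real) set" where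
  "L2 \<nu> = {f. f \<in> borel_measurable \<nu> \<and> integrable \<nu> (\<lambda>x. (f x)\<^sup>2)}"

definition H0 :: "'a measure \<Rightarrow> ('a \<Rightarrow> real) set" where
  "H0 \<nu> = {f \<in> L2 \<nu>. (\<integral>x. f x \<partial>\<nu>) = 0}"

definition l2norm :: "'a measure \<Rightarrow> ('a \<Rightarrow> real) \<Rightarrow> real" where
  "l2norm \<nu> f = sqrt (\<integral>x. (f x)\<^sup>2 \<partial>\<nu>)"

text \<open>Bounded linear operators on H(X,nu), with functions identified up to nu-a.e. equality.\<close>
definition bounded_op_on :: "'a measure \<Rightarrow> (('a \<Rightarrow> real) \<Rightarrow> ('a \<Rightarrow> real)) \<Rightarrow> bool" where
  "bounded_op_on \<nu> T \<longleftrightarrow>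
     (\<forall>f\<in>H0 \<nu>. T f \<in> H0 \<nu>) \<and>
     (\<forall>f\<in>H0 \<nu>. \<forall>g\<in>H0 \<nu>. (AE x in \<nu>. f x = g x) \<longrightarrow> (AE x in \<nu>. T f x = T g x)) \<and>
     (\<forall>f\<in>H0 \<nu>. \<forall>g\<in>H0 \<nu>. \<forall>a b::real.
        AE x in \<nu>. T (\<lambda>y. a * f y + b * g y) x = a * T f x + b * T g x) \<and>
     (\<exists>C. \<forall>f\<in>H0 \<nu>. l2norm \<nu> (T f) \<le> C * l2norm \<nu> f)"

definition invertible_op_on :: "'a measure \<Rightarrow> (('a \<Rightarrow> real) \<Rightarrow> ('a \<Rightarrow> real)) \<Rightarrow> bool" where
  "invertible_op_on \<nu> S \<longleftrightarrow> bounded_op_on \<nu> S \<and>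
     (\<exists>R. bounded_op_on \<nu> R \<and>
        (\<forall>f\<in>H0 \<nu>. (AE x in \<nu>. R (S f) x = f x) \<and> (AE x in \<nu>. S (R f) x = f x)))"

definition compact_op_on :: "'a measure \<Rightarrow> (('a \<Rightarrow> real) \<Rightarrow> ('a \<Rightarrow> real)) \<Rightarrow> bool" where
  "compact_op_on \<nu> K \<longleftrightarrow> bounded_op_on \<nu> K \<and>
     (\<forall>u::nat \<Rightarrow> 'a \<Rightarrow> real. (\<forall>n. u n \<in> H0 \<nu>) \<and> (\<exists>B. \<forall>n. l2norm \<nu> (u n) \<le> B) \<longrightarrow>
        (\<exists>r g. strict_mono r \<and> g \<in> H0 \<nu> \<and>
           (\<lambda>n. l2norm \<nu> (\<lambda>x. K (u (r n)) x - g x)) \<longlonglongrightarrow> 0))"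

definition energy :: "('a::polish_space \<Rightarrow> 'a measure) \<Rightarrow> 'a measure \<Rightarrow> ('a \<Rightarrow> real) \<Rightarrow> real" where
  "energy m \<nu> f = 1/2 * (\<integral>x. (\<integral>y. (f y - f x)\<^sup>2 \<partial>(m x)) \<partial>\<nu>)"

definition variance_nu :: "'a measure \<Rightarrow> ('a \<Rightarrow> real) \<Rightarrow> real" where
  "variance_nu \<nu> f = (\<integral>x. (f x - (\<integral>z. f z \<partial>\<nu>))\<^sup>2 \<partial>\<nu>)"

text \<open>Spectral gap as an extended real (infimum of the empty set is +infinity).\<close>
definition spectral_gap :: "('a::polish_space \<Rightarrow> 'a measure) \<Rightarrow> 'a measure \<Rightarrow> ereal" where
  "spectral_gap m \<nu> =
     (INF f\<in>{f \<in> L2 \<nu>. variance_nu \<nu> f \<noteq> 0}. ereal (energy m \<nu> f / variance_nu \<nu> f))"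

end

theory Submission
  imports Defs
begin

text \<open>
  If the spectral gap vanished, there would be mean-zero functions \<open>u\<^sub>n\<close> of unit \<open>L\<^sup>2\<close> norm
  whose energy tends to 0. Since \<open>\<parallel>\<Delta>\<^sub>m u\<parallel>\<^sup>2 \<le> 2 \<H>\<^sub>m(u)\<close>, the Laplacians
  \<open>\<Delta>\<^sub>m u\<^sub>n\<close> tend to 0. Writing \<open>-\<Delta>\<^sub>m = S + K\<close> with \<open>K\<close> compact, a subsequence
  has \<open>K u\<^sub>n \<rightarrow> g\<close>, so \<open>S u\<^sub>n \<rightarrow> -g\<close> and, \<open>S\<close> being invertible, \<open>u\<^sub>n \<rightarrow> h = -S\<^sup>-\<^sup>1 g\<close>
  in \<open>L\<^sup>2\<close>. Then \<open>\<H>\<^sub>m(h) = 0\<close>, i.e. \<open>h(y) = h(x)\<close> for \<open>m\<^sub>x\<close>-a.e. \<open>y\<close> and \<open>\<nu>\<close>-a.e. \<open>x\<close>.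
  By \<open>m\<close>-connectedness such an \<open>h\<close> is a.e. constant, hence 0 as it has mean zero,
  contradicting \<open>\<parallel>u\<^sub>n\<parallel> = 1\<close>.
\<close>

section \<open>Square-integrable functions and operators on \<open>H(X,\<nu>)\<close>\<close>

lemma sum_square_le: "((a::real) + b)\<^sup>2 \<le> 2 * a\<^sup>2 + 2 * b\<^sup>2"
proof -
  have "(a + b)\<^sup>2 + (a - b)\<^sup>2 = 2 * a\<^sup>2 + 2 * b\<^sup>2" by (simp add: power2_eq_square algebra_simps)
  then show ?thesis by (metis le_add_same_cancel1 zero_le_power2)
qed

lemma (in prob_space) square_expectation_le:
  fixes f :: "'a \<Rightarrow> real"
  assumes "integrable M f" "integrable M (\<lambda>x. (f x)\<^sup>2)"
  shows "(\<integral>x. f x \<partial>M)\<^sup>2 \<le> (\<integral>x. (f x)\<^sup>2 \<partial>M)"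
  using variance_positive[of f] variance_eq[OF assms] by simp

lemma (in prob_space) integrable_square_diff_const:
  fixes f :: "'a \<Rightarrow> real"
  assumes [measurable]: "f \<in> borel_measurable M" and f2: "integrable M (\<lambda>y. (f y)\<^sup>2)"
  shows "integrable M (\<lambda>y. (f y - c)\<^sup>2)"
proof (rule Bochner_Integration.integrable_bound)
  show "integrable M (\<lambda>y. 2 * (f y)\<^sup>2 + 2 * c\<^sup>2)" using f2 by auto
  show "AE y in M. norm ((f y - c)\<^sup>2) \<le> norm (2 * (f y)\<^sup>2 + 2 * c\<^sup>2)"
    using sum_square_le[of "f y" "- c" for y] by auto
qed measurable

lemma (in prob_space) integral_square_diff_const_le:
  fixes f :: "'a \<Rightarrow> real"
  assumes "f \<in> borel_measurable M" and f2: "integrable M (\<lambda>y. (f y)\<^sup>2)"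
  shows "(\<integral>y. (f y - c)\<^sup>2 \<partial>M) \<le> 2 * (\<integral>y. (f y)\<^sup>2 \<partial>M) + 2 * c\<^sup>2"
proof -
  have "(\<integral>y. (f y - c)\<^sup>2 \<partial>M) \<le> (\<integral>y. 2 * (f y)\<^sup>2 + 2 * c\<^sup>2 \<partial>M)"
    using sum_square_le[of "f y" "- c" for y] f2
    by (intro integral_mono integrable_square_diff_const assms) auto
  also have "\<dots> = 2 * (\<integral>y. (f y)\<^sup>2 \<partial>M) + 2 * c\<^sup>2"
    using f2 by (simp add: prob_space)
  finally show ?thesis .
qed

lemma L2_lincomb:
  assumes f: "f \<in> L2 M" and g: "g \<in> L2 M"
  shows "(\<lambda>x. a * f x + b * g x) \<in> L2 M"
proof -
  have [measurable]: "f \<in> borel_measurable M" "g \<in> borel_measurable M"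
    and f2: "integrable M (\<lambda>x. (f x)\<^sup>2)" and g2: "integrable M (\<lambda>x. (g x)\<^sup>2)"
    using f g unfolding L2_def by auto
  have "integrable M (\<lambda>x. (a * f x + b * g x)\<^sup>2)"
  proof (rule Bochner_Integration.integrable_bound)
    show "integrable M (\<lambda>x. 2 * a\<^sup>2 * (f x)\<^sup>2 + 2 * b\<^sup>2 * (g x)\<^sup>2)"
      using f2 g2 by simp
    show "AE x in M. norm ((a * f x + b * g x)\<^sup>2) \<le> norm (2 * a\<^sup>2 * (f x)\<^sup>2 + 2 * b\<^sup>2 * (g x)\<^sup>2)"
      using sum_square_le[of "a * f x" "b * g x" for x]
      by (intro AE_I2) (simp add: power_mult_distrib mult.assoc)
  qed measurable
  then show ?thesis unfolding L2_def by simp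
qed

lemma L2_add: "f \<in> L2 M \<Longrightarrow> g \<in> L2 M \<Longrightarrow> (\<lambda>x. f x + g x) \<in> L2 M"
  using L2_lincomb[of f M g 1 1] by simp

lemma L2_diff: "f \<in> L2 M \<Longrightarrow> g \<in> L2 M \<Longrightarrow> (\<lambda>x. f x - g x) \<in> L2 M"
  using L2_lincomb[of f M g 1 "-1"] by simp

lemma L2_uminus: "f \<in> L2 M \<Longrightarrow> (\<lambda>x. - f x) \<in> L2 M"
  using L2_lincomb[of f M f "-1" 0] by simp

lemma integrable_square_L2: "f \<in> L2 M \<Longrightarrow> integrable M (\<lambda>x. (f x)\<^sup>2)"
  unfolding L2_def by simp

lemma (in finite_measure) L2_const: "(\<lambda>x. c) \<in> L2 M"
  unfolding L2_def by simp

lemma (in finite_measure) integrable_L2: "f \<in> L2 M \<Longrightarrow> integrable M f"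
  unfolding L2_def by (auto intro: square_integrable_imp_integrable)

lemma integral_square_add_le:
  assumes "f \<in> L2 M" "g \<in> L2 M"
  shows "(\<integral>x. (f x + g x)\<^sup>2 \<partial>M) \<le> 2 * (\<integral>x. (f x)\<^sup>2 \<partial>M) + 2 * (\<integral>x. (g x)\<^sup>2 \<partial>M)"
proof -
  have "(\<integral>x. (f x + g x)\<^sup>2 \<partial>M) \<le> (\<integral>x. 2 * (f x)\<^sup>2 + 2 * (g x)\<^sup>2 \<partial>M)"
    using assms L2_add[OF assms] sum_square_le
    by (intro integral_mono) (auto simp: integrable_square_L2)
  also have "\<dots> = 2 * (\<integral>x. (f x)\<^sup>2 \<partial>M) + 2 * (\<integral>x. (g x)\<^sup>2 \<partial>M)"
    using assms by (simp add: integrable_square_L2)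
  finally show ?thesis .
qed

lemma integral_square_cong_AE:
  "f \<in> L2 M \<Longrightarrow> g \<in> L2 M \<Longrightarrow> AE x in M. f x = g x \<Longrightarrow> (\<integral>x. (f x)\<^sup>2 \<partial>M) = (\<integral>x. (g x)\<^sup>2 \<partial>M)"
  by (rule integral_cong_AE) (auto simp: L2_def elim: eventually_mono)

lemma l2norm_square: "(l2norm M f)\<^sup>2 = (\<integral>x. (f x)\<^sup>2 \<partial>M)"
  unfolding l2norm_def by simp

lemma (in finite_measure) H0_lincomb:
  assumes "f \<in> H0 M" "g \<in> H0 M"
  shows "(\<lambda>x. a * f x + b * g x) \<in> H0 M"
  using assms L2_lincomb[of f M g a b] integrable_L2[of f] integrable_L2[of g] by (simp add: H0_def)

lemma (in finite_measure) H0_uminus: "f \<in> H0 M \<Longrightarrow> (\<lambda>x. - f x) \<in> H0 M"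
  using H0_lincomb[of f f "-1" 0] by simp

lemma H0_L2: "f \<in> H0 M \<Longrightarrow> f \<in> L2 M"
  unfolding H0_def by simp

lemma bounded_op_on_square_bound:
  assumes "bounded_op_on M T"
  obtains C where "\<And>f. f \<in> H0 M \<Longrightarrow> (\<integral>x. (T f x)\<^sup>2 \<partial>M) \<le> C * (\<integral>x. (f x)\<^sup>2 \<partial>M)"
proof -
  obtain C where C: "\<forall>f\<in>H0 M. l2norm M (T f) \<le> C * l2norm M f"
    using assms unfolding bounded_op_on_def by auto
  have "(\<integral>x. (T f x)\<^sup>2 \<partial>M) \<le> C\<^sup>2 * (\<integral>x. (f x)\<^sup>2 \<partial>M)" if f: "f \<in> H0 M" for f
  proof -
    have "(l2norm M (T f))\<^sup>2 \<le> (C * l2norm M f)\<^sup>2"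
      using C f by (intro power_mono) (auto simp: l2norm_def)
    then show ?thesis unfolding l2norm_square power_mult_distrib by simp
  qed
  then show thesis using that by blast
qed

lemma bounded_op_on_tendsto_0:
  assumes "bounded_op_on M T" and "\<And>n. f n \<in> H0 M"
    and "(\<lambda>n. \<integral>x. (f n x)\<^sup>2 \<partial>M) \<longlonglongrightarrow> 0"
  shows "(\<lambda>n. \<integral>x. (T (f n) x)\<^sup>2 \<partial>M) \<longlonglongrightarrow> 0"
proof -
  obtain C where C: "\<And>f. f \<in> H0 M \<Longrightarrow> (\<integral>x. (T f x)\<^sup>2 \<partial>M) \<le> C * (\<integral>x. (f x)\<^sup>2 \<partial>M)"
    using bounded_op_on_square_bound[OF assms(1)] by blast
  show ?thesis
  proof (rule Lim_null_comparison)
    show "\<forall>\<^sub>F n in sequentially. norm (\<integral>x. (T (f n) x)\<^sup>2 \<partial>M) \<le> C * (\<integral>x. (f n x)\<^sup>2 \<partial>M)"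
      using C assms(2) by simp
    show "(\<lambda>n. C * (\<integral>x. (f n x)\<^sup>2 \<partial>M)) \<longlonglongrightarrow> 0"
      using tendsto_mult_right_zero[OF assms(3)] by simp
  qed
qed

section \<open>Random walks with an invariant probability measure\<close>

lemma energy_nonneg: "0 \<le> energy m \<nu> f"
  unfolding energy_def by (auto intro!: integral_nonneg)

lemma energy_affine: "energy m \<nu> (\<lambda>x. a * (f x - c)) = a\<^sup>2 * energy m \<nu> f"
proof -
  have "(a * (f y - c) - a * (f x - c))\<^sup>2 = a\<^sup>2 * (f y - f x)\<^sup>2" for x y
    by (simp add: power2_eq_square algebra_simps)
  then show ?thesis unfolding energy_def by simp
qed

locale mrw_invariant_prob_space = prob_space \<nu> for \<nu> :: "'a::polish_space measure" +
  fixes m :: "'a \<Rightarrow> 'a measure"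
  assumes mrw: "mrw_space m" and sets_nu: "sets \<nu> = sets borel"
    and invariant: "invariant_measure m \<nu>"
begin

lemma prob_space_m: "prob_space (m x)" and sets_m: "sets (m x) = sets borel"
  using mrw unfolding mrw_space_def by auto

lemma space_m[simp]: "space (m x) = UNIV"
  using sets_eq_imp_space_eq[OF sets_m] by simp

lemma space_nu[simp]: "space \<nu> = UNIV"
  using sets_eq_imp_space_eq[OF sets_nu] by simp

lemma measurable_nu_iff: "f \<in> borel_measurable \<nu> \<longleftrightarrow> f \<in> borel_measurable borel"
  by (simp add: measurable_cong_sets[OF sets_nu refl])

lemma measurable_m_iff: "f \<in> borel_measurable (m x) \<longleftrightarrow> f \<in> borel_measurable borel"
  by (simp add: measurable_cong_sets[OF sets_m refl])

lemma emeasure_m_measurable: "A \<in> sets borel \<Longrightarrow> (\<lambda>x. emeasure (m x) A) \<in> borel_measurable borel"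
  using mrw unfolding mrw_space_def by auto

lemma m_measurable[measurable]: "m \<in> measurable borel (subprob_algebra borel)"
  by (rule measurable_subprob_algebra)
     (auto simp: sets_m emeasure_m_measurable intro: prob_space_imp_subprob_space prob_space_m)

lemma bind_nu_m: "\<nu> \<bind> m = \<nu>"
proof (rule measure_eqI)
  have sets_bind: "sets (\<nu> \<bind> m) = sets borel"
    by (rule sets_bind[where N=borel]) (auto simp: sets_m)
  then show "sets (\<nu> \<bind> m) = sets \<nu>" by (simp add: sets_nu)
  fix A assume "A \<in> sets (\<nu> \<bind> m)"
  then have A: "A \<in> sets borel" by (simp add: sets_bind)
  have "emeasure (\<nu> \<bind> m) A = (\<integral>\<^sup>+x. emeasure (m x) A \<partial>\<nu>)"
    using m_measurable by (intro emeasure_bind[OF _ _ A]) (auto simp: measurable_cong_sets[OF sets_nu refl])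
  also have "\<dots> = emeasure \<nu> A" using invariant A unfolding invariant_measure_def by auto
  finally show "emeasure (\<nu> \<bind> m) A = emeasure \<nu> A" .
qed

lemma integral_m_measurable:
  fixes f :: "'a \<Rightarrow> 'a \<Rightarrow> real"
  assumes [measurable]: "case_prod f \<in> borel_measurable (borel \<Otimes>\<^sub>M borel)"
  shows "(\<lambda>x. \<integral>y. f x y \<partial>m x) \<in> borel_measurable borel"
proof -
  note integral_measurable_subprob_algebra[measurable] measurable_distr2[measurable]
  have "(\<lambda>x. integral\<^sup>L (distr (m x) (borel \<Otimes>\<^sub>M borel) (\<lambda>y. (x, y))) (case_prod f)) \<in> borel_measurable borel"
    by measurable
  moreover have "integral\<^sup>L (distr (m x) (borel \<Otimes>\<^sub>M borel) (\<lambda>y. (x, y))) (case_prod f) = (\<integral>y. f x y \<partial>m x)" for x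
    by (subst integral_distr) (auto simp: measurable_m_iff)
  ultimately show ?thesis by simp
qed

lemma nn_integral_m_invariant:
  assumes "g \<in> borel_measurable borel"
  shows "(\<integral>\<^sup>+x. \<integral>\<^sup>+y. g y \<partial>m x \<partial>\<nu>) = (\<integral>\<^sup>+x. g x \<partial>\<nu>)"
  using nn_integral_bind[OF assms, of m \<nu>] m_measurable bind_nu_m
  by (simp add: measurable_cong_sets[OF sets_nu refl])

lemma
  fixes g :: "'a \<Rightarrow> real"
  assumes [measurable]: "g \<in> borel_measurable borel" and nonneg: "\<And>x. 0 \<le> g x"
    and g: "integrable \<nu> g"
  shows AE_integrable_m: "AE x in \<nu>. integrable (m x) g"
    and integrable_integral_m: "integrable \<nu> (\<lambda>x. \<integral>y. g y \<partial>m x)"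
    and integral_integral_m: "(\<integral>x. (\<integral>y. g y \<partial>m x) \<partial>\<nu>) = (\<integral>x. g x \<partial>\<nu>)"
proof -
  have fin: "(\<integral>\<^sup>+x. g x \<partial>\<nu>) < \<infinity>"
    using g nonneg by (simp add: integrable_iff_bounded)
  have "(\<lambda>x. \<integral>\<^sup>+y. g y \<partial>m x) \<in> borel_measurable \<nu>"
    using nn_integral_measurable_subprob_algebra2[where f="\<lambda>x y. ennreal (g y)" and N=borel]
    by (simp add: measurable_nu_iff)
  then have "AE x in \<nu>. (\<integral>\<^sup>+y. g y \<partial>m x) \<noteq> \<infinity>"
    by (rule nn_integral_PInf_AE) (use nn_integral_m_invariant fin in simp)
  then show ae: "AE x in \<nu>. integrable (m x) g"
    by eventually_elim (auto intro!: integrableI_nonneg nonneg simp: measurable_m_iff less_top)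
  have [measurable]: "(\<lambda>x. \<integral>y. g y \<partial>m x) \<in> borel_measurable borel"
    by (rule integral_m_measurable) simp
  have eq: "(\<integral>\<^sup>+x. ennreal (\<integral>y. g y \<partial>m x) \<partial>\<nu>) = (\<integral>\<^sup>+x. g x \<partial>\<nu>)"
  proof -
    have "(\<integral>\<^sup>+x. ennreal (\<integral>y. g y \<partial>m x) \<partial>\<nu>) = (\<integral>\<^sup>+x. \<integral>\<^sup>+y. g y \<partial>m x \<partial>\<nu>)"
      using ae by (intro nn_integral_cong_AE) (auto elim!: eventually_mono simp: nn_integral_eq_integral nonneg)
    then show ?thesis by (simp add: nn_integral_m_invariant)
  qed
  show "integrable \<nu> (\<lambda>x. \<integral>y. g y \<partial>m x)"
    using eq fin nonneg by (intro integrableI_nonneg) (auto simp: measurable_nu_iff intro: integral_nonneg)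
  have "(\<integral>x. (\<integral>y. g y \<partial>m x) \<partial>\<nu>) = enn2real (\<integral>\<^sup>+x. ennreal (\<integral>y. g y \<partial>m x) \<partial>\<nu>)"
    by (rule integral_eq_nn_integral) (auto simp: measurable_nu_iff nonneg integral_nonneg)
  also have "\<dots> = (\<integral>x. g x \<partial>\<nu>)"
    using eq integral_eq_nn_integral[of g \<nu>] nonneg by (simp add: measurable_nu_iff)
  finally show "(\<integral>x. (\<integral>y. g y \<partial>m x) \<partial>\<nu>) = (\<integral>x. g x \<partial>\<nu>)" .
qed

lemma measurable_L2: "f \<in> L2 \<nu> \<Longrightarrow> f \<in> borel_measurable borel"
  unfolding L2_def by (simp add: measurable_nu_iff)

lemma L2_imp_AE_integrable_square_m:
  assumes f: "f \<in> L2 \<nu>"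
  shows "AE x in \<nu>. integrable (m x) (\<lambda>y. (f y)\<^sup>2)"
  using measurable_L2[OF f] integrable_square_L2[OF f] by (intro AE_integrable_m) auto

lemma L2_imp_AE_integrable_m:
  assumes f: "f \<in> L2 \<nu>"
  shows "AE x in \<nu>. integrable (m x) f"
  using L2_imp_AE_integrable_square_m[OF f]
proof eventually_elim
  case (elim x)
  have "f \<in> borel_measurable (m x)" using measurable_L2[OF f] by (simp add: measurable_m_iff)
  from this elim show ?case
    by (rule finite_measure.square_integrable_imp_integrable[OF prob_space.finite_measure[OF prob_space_m]])
qed

lemma L2_imp_AE_integrable_square_diff_m:
  assumes f: "f \<in> L2 \<nu>"
  shows "AE x in \<nu>. integrable (m x) (\<lambda>y. (f y - f x)\<^sup>2)"
  using L2_imp_AE_integrable_square_m[OF f]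
proof eventually_elim
  case (elim x)
  have "f \<in> borel_measurable (m x)" using measurable_L2[OF f] by (simp add: measurable_m_iff)
  from this elim show ?case by (rule prob_space.integrable_square_diff_const[OF prob_space_m])
qed

lemma
  assumes f: "f \<in> L2 \<nu>"
  shows integrable_local_energy: "integrable \<nu> (\<lambda>x. \<integral>y. (f y - f x)\<^sup>2 \<partial>m x)"
    and integral_local_energy_le: "(\<integral>x. (\<integral>y. (f y - f x)\<^sup>2 \<partial>m x) \<partial>\<nu>) \<le> 4 * (\<integral>x. (f x)\<^sup>2 \<partial>\<nu>)"
proof -
  note [measurable] = measurable_L2[OF f]
  have f2: "integrable \<nu> (\<lambda>x. (f x)\<^sup>2)" using f by (rule integrable_square_L2)
  have m_f2: "integrable \<nu> (\<lambda>x. \<integral>y. (f y)\<^sup>2 \<partial>m x)"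
    "(\<integral>x. (\<integral>y. (f y)\<^sup>2 \<partial>m x) \<partial>\<nu>) = (\<integral>x. (f x)\<^sup>2 \<partial>\<nu>)"
    by (intro integrable_integral_m integral_integral_m f2; simp)+
  have bound: "integrable \<nu> (\<lambda>x. 2 * (\<integral>y. (f y)\<^sup>2 \<partial>m x) + 2 * (f x)\<^sup>2)"
    using m_f2 f2 by simp
  have le: "AE x in \<nu>. (\<integral>y. (f y - f x)\<^sup>2 \<partial>m x) \<le> 2 * (\<integral>y. (f y)\<^sup>2 \<partial>m x) + 2 * (f x)\<^sup>2"
    using L2_imp_AE_integrable_square_m[OF f]
  proof eventually_elim
    case (elim x)
    have "f \<in> borel_measurable (m x)" by (simp add: measurable_m_iff)
    from this elim show ?case by (rule prob_space.integral_square_diff_const_le[OF prob_space_m])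
  qed
  have [measurable]: "(\<lambda>x. \<integral>y. (f y - f x)\<^sup>2 \<partial>m x) \<in> borel_measurable borel"
    by (rule integral_m_measurable) simp
  show int: "integrable \<nu> (\<lambda>x. \<integral>y. (f y - f x)\<^sup>2 \<partial>m x)"
  proof (rule Bochner_Integration.integrable_bound[OF bound])
    show "AE x in \<nu>. norm (\<integral>y. (f y - f x)\<^sup>2 \<partial>m x) \<le> norm (2 * (\<integral>y. (f y)\<^sup>2 \<partial>m x) + 2 * (f x)\<^sup>2)"
      using le by eventually_elim (simp add: integral_nonneg)
  qed (simp add: measurable_nu_iff)
  have "(\<integral>x. (\<integral>y. (f y - f x)\<^sup>2 \<partial>m x) \<partial>\<nu>) \<le> (\<integral>x. 2 * (\<integral>y. (f y)\<^sup>2 \<partial>m x) + 2 * (f x)\<^sup>2 \<partial>\<nu>)"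
    by (rule integral_mono_AE[OF int bound le])
  also have "\<dots> = 4 * (\<integral>x. (f x)\<^sup>2 \<partial>\<nu>)"
    using m_f2 f2 by simp
  finally show "(\<integral>x. (\<integral>y. (f y - f x)\<^sup>2 \<partial>m x) \<partial>\<nu>) \<le> 4 * (\<integral>x. (f x)\<^sup>2 \<partial>\<nu>)" .
qed

lemma energy_le: "f \<in> L2 \<nu> \<Longrightarrow> energy m \<nu> f \<le> 2 * (\<integral>x. (f x)\<^sup>2 \<partial>\<nu>)"
  unfolding energy_def using integral_local_energy_le[of f] by simp

lemma energy_add_le:
  assumes f: "f \<in> L2 \<nu>" and g: "g \<in> L2 \<nu>"
  shows "energy m \<nu> (\<lambda>x. f x + g x) \<le> 2 * energy m \<nu> f + 2 * energy m \<nu> g"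
proof -
  have fg: "(\<lambda>x. f x + g x) \<in> L2 \<nu>" by (rule L2_add[OF f g])
  have le: "AE x in \<nu>. (\<integral>y. ((f y + g y) - (f x + g x))\<^sup>2 \<partial>m x) \<le>
      2 * (\<integral>y. (f y - f x)\<^sup>2 \<partial>m x) + 2 * (\<integral>y. (g y - g x)\<^sup>2 \<partial>m x)"
    using L2_imp_AE_integrable_square_diff_m[OF f] L2_imp_AE_integrable_square_diff_m[OF g]
      L2_imp_AE_integrable_square_diff_m[OF fg]
  proof eventually_elim
    case (elim x)
    have "(\<integral>y. ((f y + g y) - (f x + g x))\<^sup>2 \<partial>m x) \<le> (\<integral>y. 2 * (f y - f x)\<^sup>2 + 2 * (g y - g x)\<^sup>2 \<partial>m x)"
      using elim sum_square_le[of "f y - f x" "g y - g x" for y] by (intro integral_mono) (simp_all add: algebra_simps)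
    also have "\<dots> = 2 * (\<integral>y. (f y - f x)\<^sup>2 \<partial>m x) + 2 * (\<integral>y. (g y - g x)\<^sup>2 \<partial>m x)"
      using elim by simp
    finally show ?case .
  qed
  have "(\<integral>x. (\<integral>y. ((f y + g y) - (f x + g x))\<^sup>2 \<partial>m x) \<partial>\<nu>) \<le>
      (\<integral>x. 2 * (\<integral>y. (f y - f x)\<^sup>2 \<partial>m x) + 2 * (\<integral>y. (g y - g x)\<^sup>2 \<partial>m x) \<partial>\<nu>)"
    using integrable_local_energy[OF f] integrable_local_energy[OF g] integrable_local_energy[OF fg]
    by (intro integral_mono_AE[OF _ _ le]) auto
  also have "\<dots> = 2 * (\<integral>x. (\<integral>y. (f y - f x)\<^sup>2 \<partial>m x) \<partial>\<nu>) + 2 * (\<integral>x. (\<integral>y. (g y - g x)\<^sup>2 \<partial>m x) \<partial>\<nu>)"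
    using integrable_local_energy[OF f] integrable_local_energy[OF g] by simp
  finally show ?thesis unfolding energy_def by simp
qed

lemma energy_eq_0_imp_AE_invariant:
  assumes f: "f \<in> L2 \<nu>" and "energy m \<nu> f = 0"
  shows "AE x in \<nu>. AE y in m x. f y = f x"
proof -
  have "(\<integral>x. (\<integral>y. (f y - f x)\<^sup>2 \<partial>m x) \<partial>\<nu>) = 0" using assms(2) unfolding energy_def by simp
  then have "AE x in \<nu>. (\<integral>y. (f y - f x)\<^sup>2 \<partial>m x) = 0"
    using integral_nonneg_eq_0_iff_AE[OF integrable_local_energy[OF f]] by (simp add: integral_nonneg)
  with L2_imp_AE_integrable_square_diff_m[OF f] show ?thesis
  proof eventually_elim
    case (elim x)
    then have "AE y in m x. (f y - f x)\<^sup>2 = 0"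
      using integral_nonneg_eq_0_iff_AE[of "m x" "\<lambda>y. (f y - f x)\<^sup>2"] by simp
    then show ?case by eventually_elim simp
  qed
qed

lemma
  assumes f: "f \<in> L2 \<nu>"
  shows L2_laplacian: "laplacian m f \<in> L2 \<nu>"
    and integral_laplacian_square_le: "(\<integral>x. (laplacian m f x)\<^sup>2 \<partial>\<nu>) \<le> 2 * energy m \<nu> f"
proof -
  note [measurable] = measurable_L2[OF f]
  have [measurable]: "laplacian m f \<in> borel_measurable borel"
    unfolding laplacian_def by (rule integral_m_measurable) simp
  have le: "AE x in \<nu>. (laplacian m f x)\<^sup>2 \<le> (\<integral>y. (f y - f x)\<^sup>2 \<partial>m x)"
    using L2_imp_AE_integrable_m[OF f] L2_imp_AE_integrable_square_diff_m[OF f]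
  proof eventually_elim
    case (elim x)
    then show ?case unfolding laplacian_def
      by (intro prob_space.square_expectation_le[OF prob_space_m])
         (simp_all add: finite_measure.integrable_const[OF prob_space.finite_measure[OF prob_space_m]])
  qed
  have int: "integrable \<nu> (\<lambda>x. (laplacian m f x)\<^sup>2)"
  proof (rule Bochner_Integration.integrable_bound[OF integrable_local_energy[OF f]])
    show "AE x in \<nu>. norm ((laplacian m f x)\<^sup>2) \<le> norm (\<integral>y. (f y - f x)\<^sup>2 \<partial>m x)"
      using le by eventually_elim (simp add: integral_nonneg)
  qed (simp add: measurable_nu_iff)
  then show "laplacian m f \<in> L2 \<nu>" by (simp add: L2_def measurable_nu_iff)
  have "(\<integral>x. (laplacian m f x)\<^sup>2 \<partial>\<nu>) \<le> (\<integral>x. (\<integral>y. (f y - f x)\<^sup>2 \<partial>m x) \<partial>\<nu>)"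
    by (rule integral_mono_AE[OF int integrable_local_energy[OF f] le])
  then show "(\<integral>x. (laplacian m f x)\<^sup>2 \<partial>\<nu>) \<le> 2 * energy m \<nu> f"
    unfolding energy_def by simp
qed

section \<open>Ergodicity of \<open>m\<close>-connected spaces\<close>

lemma sets_m_iter: "sets (m_iter m n x) = sets borel"
proof (cases n)
  case (Suc k)
  have "sigma_sets (space borel) (sets borel) = sets (borel :: 'a measure)"
    by (rule sets.sigma_sets_eq)
  then show ?thesis using Suc by (simp add: sets_measure_of_conv)
qed (simp add: sets_m)

lemma space_m_iter[simp]: "space (m_iter m n x) = UNIV"
  using sets_eq_imp_space_eq[OF sets_m_iter] by simp

lemma m_iter_Suc_bind: "m_iter m (Suc n) x = m_iter m n x \<bind> m"
proof -
  have m_measurable': "m \<in> measurable (m_iter m n x) (subprob_algebra borel)"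
    using m_measurable by (simp add: measurable_cong_sets[OF sets_m_iter refl])
  have sets_bind: "sets (m_iter m n x \<bind> m) = sets borel"
    by (rule sets_bind[where N=borel]) (auto simp: sets_m)
  have "m_iter m (Suc n) x = measure_of UNIV (sets borel) (emeasure (m_iter m n x \<bind> m))"
    unfolding m_iter.simps
  proof (rule measure_of_eq)
    fix A :: "'a set" assume "A \<in> sigma_sets UNIV (sets borel)"
    then have A: "A \<in> sets borel" using sets.sigma_sets_eq[of "borel :: 'a measure"] by simp
    show "(\<integral>\<^sup>+z. emeasure (m z) A \<partial>m_iter m n x) = emeasure (m_iter m n x \<bind> m) A"
      by (rule emeasure_bind[OF _ m_measurable' A, symmetric]) simp
  qed simp
  also have "\<dots> = m_iter m n x \<bind> m"
    using measure_of_of_measure[of "m_iter m n x \<bind> m"] sets_eq_imp_space_eq[OF sets_bind] sets_bind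
    by simp
  finally show ?thesis .
qed

lemma m_iter_measurable: "(\<lambda>x. m_iter m n x) \<in> measurable borel (subprob_algebra borel)"
proof (induction n)
  case (Suc n)
  then show ?case unfolding m_iter_Suc_bind by (rule measurable_bind2[OF _ m_measurable])
qed simp

lemma null_set_kernel_positive:
  assumes "A \<in> null_sets \<nu>"
  shows "{x. emeasure (m x) A \<noteq> 0} \<in> null_sets \<nu>"
proof -
  have A: "A \<in> sets borel" using assms sets_nu by auto
  note [measurable] = emeasure_m_measurable[OF A]
  have "(\<integral>\<^sup>+x. emeasure (m x) A \<partial>\<nu>) = 0"
    using invariant A assms unfolding invariant_measure_def by auto
  then have "AE x in \<nu>. emeasure (m x) A = 0"
    by (subst (asm) nn_integral_0_iff_AE) (simp_all add: measurable_nu_iff)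
  then show ?thesis
    by (subst (asm) AE_iff_null) (simp_all add: sets_nu)
qed

lemma null_set_absorbing_superset:
  assumes "N0 \<in> null_sets \<nu>"
  obtains N where "N \<in> null_sets \<nu>" "N0 \<subseteq> N" "\<And>x. x \<notin> N \<Longrightarrow> emeasure (m x) N = 0"
proof -
  define Ns where "Ns = rec_nat N0 (\<lambda>_ A. A \<union> {x. emeasure (m x) A \<noteq> 0})"
  have Ns_Suc: "Ns (Suc k) = Ns k \<union> {x. emeasure (m x) (Ns k) \<noteq> 0}" for k
    by (simp add: Ns_def)
  have Ns_null: "Ns k \<in> null_sets \<nu>" for k
  proof (induction k)
    case (Suc k)
    then show ?case unfolding Ns_Suc by (intro null_sets.Un null_set_kernel_positive)
  qed (simp add: Ns_def assms)
  show thesis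
  proof
    show "(\<Union>k. Ns k) \<in> null_sets \<nu>" using Ns_null by (rule null_sets_UN)
    show "N0 \<subseteq> (\<Union>k. Ns k)" using UN_upper[of 0 UNIV Ns] by (simp add: Ns_def)
    fix x assume "x \<notin> (\<Union>k. Ns k)"
    then have "emeasure (m x) (Ns k) = 0" for k using Ns_Suc[of k] by auto
    moreover have "Ns k \<in> sets (m x)" for k using null_setsD2[OF Ns_null[of k]] by (simp add: sets_m sets_nu)
    ultimately show "emeasure (m x) (\<Union>k. Ns k) = 0" by (intro emeasure_UN_eq_0) auto
  qed
qed

lemma m_iter_absorbing:
  assumes W: "W \<in> sets borel" and absorbing: "\<And>x. x \<in> W \<Longrightarrow> emeasure (m x) (- W) = 0"
    and "x \<in> W"
  shows "emeasure (m_iter m n x) (- W) = 0"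
proof (induction n)
  case 0 then show ?case using absorbing[OF \<open>x \<in> W\<close>] by simp
next
  case (Suc n)
  have cW: "- W \<in> sets borel" using W by (simp add: Compl_eq_Diff_UNIV)
  have "AE z in m_iter m n x. z \<in> W"
    using Suc cW by (intro AE_I[where N="- W"]) (auto simp: sets_m_iter)
  then have "(\<integral>\<^sup>+z. emeasure (m z) (- W) \<partial>m_iter m n x) = 0"
    by (subst nn_integral_0_iff_AE) (auto elim!: eventually_mono simp: absorbing
        measurable_cong_sets[OF sets_m_iter refl] emeasure_m_measurable[OF cW])
  moreover have "emeasure (m_iter m (Suc n) x) (- W) = (\<integral>\<^sup>+z. emeasure (m z) (- W) \<partial>m_iter m n x)"
    unfolding m_iter_Suc_bind
    by (rule emeasure_bind[OF _ _ cW]) (simp_all add: measurable_cong_sets[OF sets_m_iter refl])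
  ultimately show ?case by simp
qed

lemma AE_invariant_set_closed_under_m_iter:
  assumes [measurable]: "A \<in> sets borel"
    and invariant_A: "AE x in \<nu>. AE y in m x. (y \<in> A) = (x \<in> A)"
  obtains N where "N \<in> null_sets \<nu>" "\<And>n x. x \<in> A - N \<Longrightarrow> emeasure (m_iter m n x) (- (A - N)) = 0"
proof -
  obtain N0 where N0: "{x. \<not> (AE y in m x. (y \<in> A) = (x \<in> A))} \<subseteq> N0" "N0 \<in> null_sets \<nu>"
    using invariant_A by (auto elim!: AE_E simp: null_sets_def)
  obtain N where N: "N \<in> null_sets \<nu>" "N0 \<subseteq> N" and absorbing_N: "\<And>x. x \<notin> N \<Longrightarrow> emeasure (m x) N = 0"
    using null_set_absorbing_superset[OF N0(2)] by blast
  have [measurable]: "N \<in> sets borel" using null_setsD2[OF N(1)] by (simp add: sets_nu)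
  have "emeasure (m x) (- (A - N)) = 0" if x: "x \<in> A - N" for x
  proof -
    have "AE y in m x. (y \<in> A) = (x \<in> A)" using x N0(1) N(2) by blast
    then have "AE y in m x. y \<in> A" using x by (auto elim: eventually_mono)
    moreover have "AE y in m x. y \<notin> N"
      using x absorbing_N by (intro AE_not_in) (auto simp: sets_m)
    ultimately have "AE y in m x. y \<in> A - N" by eventually_elim simp
    then show ?thesis by (subst (asm) AE_iff_measurable[where N="- (A - N)"]) (auto simp: sets_m)
  qed
  then show thesis using N(1) by (intro that m_iter_absorbing) auto
qed

lemma invariant_function_sign:
  fixes h :: "'a \<Rightarrow> real"
  assumes connected: "m_connected m \<nu>" and [measurable]: "h \<in> borel_measurable borel"
    and invariant_h: "AE x in \<nu>. AE y in m x. h y = h x"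
  shows "{x. h x \<le> 0} \<in> null_sets \<nu> \<or> {x. 0 < h x} \<in> null_sets \<nu>"
proof (rule disjCI)
  define D where "D = {x. 0 < h x}"
  define Z where "Z = {x. \<forall>n. emeasure (m_iter m n x) D = 0}"
  have [measurable]: "D \<in> sets borel" unfolding D_def by measurable
  assume "D \<notin> null_sets \<nu>"
  then have "0 < emeasure \<nu> D" by (simp add: D_def null_sets_def sets_nu zero_less_iff_neq_zero)
  moreover have "emeasure \<nu> D < \<infinity>" by (simp add: less_top[symmetric])
  ultimately have "emeasure \<nu> Z = 0"
    using connected \<open>D \<in> sets borel\<close> unfolding m_connected_def Z_def by blast
  moreover have "(\<lambda>x. emeasure (m_iter m n x) D) \<in> borel_measurable borel" for n
    by (rule measurable_compose[OF m_iter_measurable measurable_emeasure_subprob_algebra]) simp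
  then have "Z \<in> sets borel" unfolding Z_def by measurable
  ultimately have Z: "Z \<in> null_sets \<nu>" by (simp add: null_sets_def sets_nu)
  have A: "{x. h x \<le> 0} \<in> sets borel" by measurable
  have "AE x in \<nu>. AE y in m x. (y \<in> {x. h x \<le> 0}) = (x \<in> {x. h x \<le> 0})"
    using invariant_h by (auto elim!: eventually_mono)
  then obtain N where N: "N \<in> null_sets \<nu>"
    and closed: "\<And>n x. x \<in> {x. h x \<le> 0} - N \<Longrightarrow> emeasure (m_iter m n x) (- ({x. h x \<le> 0} - N)) = 0"
    using AE_invariant_set_closed_under_m_iter[OF A] by blast
  have "emeasure (m_iter m n x) D = 0" if "x \<in> {x. h x \<le> 0} - N" for n x
  proof -
    have "emeasure (m_iter m n x) D \<le> emeasure (m_iter m n x) (- ({x. h x \<le> 0} - N))"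
      using null_setsD2[OF N] by (intro emeasure_mono) (auto simp: D_def sets_m_iter sets_nu)
    with closed[OF that] show ?thesis by simp
  qed
  then have "{x. h x \<le> 0} \<subseteq> Z \<union> N" by (auto simp: Z_def)
  moreover have "{x. h x \<le> 0} \<in> sets \<nu>" unfolding sets_nu by measurable
  ultimately show "{x. h x \<le> 0} \<in> null_sets \<nu>"
    by (intro null_sets_subset[OF null_sets.Un[OF Z N]])
qed

lemma AE_eq_0_if_invariant_mean_0:
  fixes h :: "'a \<Rightarrow> real"
  assumes connected: "m_connected m \<nu>" and h_measurable: "h \<in> borel_measurable borel"
    and h: "integrable \<nu> h" and invariant_h: "AE x in \<nu>. AE y in m x. h y = h x"
    and mean: "(\<integral>x. h x \<partial>\<nu>) = 0"
  shows "AE x in \<nu>. h x = 0"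
  using invariant_function_sign[OF connected h_measurable invariant_h]
proof
  assume "{x. h x \<le> 0} \<in> null_sets \<nu>"
  then have pos: "AE x in \<nu>. 0 < h x" by (auto dest!: AE_not_in elim!: eventually_mono)
  then have "AE x in \<nu>. 0 \<le> h x" by eventually_elim simp
  then have "AE x in \<nu>. h x = 0" using integral_nonneg_eq_0_iff_AE[OF h] mean by simp
  with pos show ?thesis by eventually_elim simp
next
  assume "{x. 0 < h x} \<in> null_sets \<nu>"
  then have "AE x in \<nu>. 0 \<le> - h x" by (auto dest!: AE_not_in elim!: eventually_mono)
  then have "AE x in \<nu>. - h x = 0"
    using integral_nonneg_eq_0_iff_AE[of \<nu> "\<lambda>x. - h x"] h mean by simp
  then show ?thesis by simp
qed

lemma H0_energy_eq_0_imp_AE_0: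
  assumes "m_connected m \<nu>" and h: "h \<in> H0 \<nu>" and "energy m \<nu> h = 0"
  shows "AE x in \<nu>. h x = 0"
  using h assms by (intro AE_eq_0_if_invariant_mean_0 energy_eq_0_imp_AE_invariant)
    (auto simp: H0_def measurable_L2 integrable_L2)

section \<open>Vanishing spectral gap\<close>

lemma energy_eq_0_if_L2_limit:
  assumes h: "h \<in> L2 \<nu>" and v: "\<And>n. v n \<in> L2 \<nu>"
    and v_h: "(\<lambda>n. \<integral>x. (v n x - h x)\<^sup>2 \<partial>\<nu>) \<longlonglongrightarrow> 0"
    and energy_v: "(\<lambda>n. energy m \<nu> (v n)) \<longlonglongrightarrow> 0"
  shows "energy m \<nu> h = 0"
proof -
  have "energy m \<nu> h \<le> 4 * (\<integral>x. (v n x - h x)\<^sup>2 \<partial>\<nu>) + 2 * energy m \<nu> (v n)" for n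
  proof -
    have hv: "(\<lambda>x. h x - v n x) \<in> L2 \<nu>" by (rule L2_diff[OF h v])
    have "energy m \<nu> h = energy m \<nu> (\<lambda>x. (h x - v n x) + v n x)" by simp
    also have "\<dots> \<le> 2 * energy m \<nu> (\<lambda>x. h x - v n x) + 2 * energy m \<nu> (v n)"
      by (rule energy_add_le[OF hv v])
    also have "\<dots> \<le> 4 * (\<integral>x. (h x - v n x)\<^sup>2 \<partial>\<nu>) + 2 * energy m \<nu> (v n)"
      using energy_le[OF hv] by simp
    finally show ?thesis by (simp add: power2_commute)
  qed
  moreover have "(\<lambda>n. 4 * (\<integral>x. (v n x - h x)\<^sup>2 \<partial>\<nu>) + 2 * energy m \<nu> (v n)) \<longlonglongrightarrow> 4 * 0 + 2 * 0"
    by (intro tendsto_intros v_h energy_v)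
  ultimately have "energy m \<nu> h \<le> 4 * 0 + 2 * 0"
    by (intro tendsto_lowerbound) auto
  then show ?thesis using energy_nonneg[of m \<nu> h] by simp
qed

lemma L2_tendsto_0_if_laplacian_split:
  assumes split: "\<And>n. AE x in \<nu>. - laplacian m (f n) x = a n x + b n x"
    and f: "\<And>n. f n \<in> L2 \<nu>" and a: "\<And>n. a n \<in> L2 \<nu>" and b: "\<And>n. b n \<in> L2 \<nu>"
    and energy_f: "(\<lambda>n. energy m \<nu> (f n)) \<longlonglongrightarrow> 0"
    and b_0: "(\<lambda>n. \<integral>x. (b n x)\<^sup>2 \<partial>\<nu>) \<longlonglongrightarrow> 0"
  shows "(\<lambda>n. \<integral>x. (a n x)\<^sup>2 \<partial>\<nu>) \<longlonglongrightarrow> 0"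
proof (rule Lim_null_comparison)
  show "(\<lambda>n. 4 * energy m \<nu> (f n) + 2 * (\<integral>x. (b n x)\<^sup>2 \<partial>\<nu>)) \<longlonglongrightarrow> 0"
    using tendsto_add[OF tendsto_mult_right_zero[OF energy_f] tendsto_mult_right_zero[OF b_0]]
    by simp
  have "(\<integral>x. (a n x)\<^sup>2 \<partial>\<nu>) \<le> 4 * energy m \<nu> (f n) + 2 * (\<integral>x. (b n x)\<^sup>2 \<partial>\<nu>)" for n
  proof -
    have lap: "(\<lambda>x. - laplacian m (f n) x) \<in> L2 \<nu>" by (rule L2_uminus[OF L2_laplacian[OF f]])
    have mb: "(\<lambda>x. - b n x) \<in> L2 \<nu>" by (rule L2_uminus[OF b])
    have "(\<integral>x. (a n x)\<^sup>2 \<partial>\<nu>) = (\<integral>x. (- laplacian m (f n) x + - b n x)\<^sup>2 \<partial>\<nu>)"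
      using split[of n] by (intro integral_square_cong_AE a L2_add lap mb) (auto elim: eventually_mono)
    also have "\<dots> \<le> 2 * (\<integral>x. (laplacian m (f n) x)\<^sup>2 \<partial>\<nu>) + 2 * (\<integral>x. (b n x)\<^sup>2 \<partial>\<nu>)"
      using integral_square_add_le[OF lap mb] by simp
    also have "\<dots> \<le> 4 * energy m \<nu> (f n) + 2 * (\<integral>x. (b n x)\<^sup>2 \<partial>\<nu>)"
      using integral_laplacian_square_le[OF f] by simp
    finally show ?thesis .
  qed
  then show "\<forall>\<^sub>F n in sequentially. norm (\<integral>x. (a n x)\<^sup>2 \<partial>\<nu>) \<le> 4 * energy m \<nu> (f n) + 2 * (\<integral>x. (b n x)\<^sup>2 \<partial>\<nu>)"
    by simp
qed

lemma H0_normalize: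
  assumes f: "f \<in> L2 \<nu>" and "variance_nu \<nu> f \<noteq> 0"
  obtains u where "u \<in> H0 \<nu>" "(\<integral>x. (u x)\<^sup>2 \<partial>\<nu>) = 1"
    "energy m \<nu> u = energy m \<nu> f / variance_nu \<nu> f"
proof
  define c where "c = (\<integral>x. f x \<partial>\<nu>)"
  define V where "V = variance_nu \<nu> f"
  have V: "V = (\<integral>x. (f x - c)\<^sup>2 \<partial>\<nu>)" unfolding V_def variance_nu_def c_def ..
  then have "0 < V" using assms(2) by (simp add: V_def order_le_neq_trans integral_nonneg)
  define u where "u = (\<lambda>x. 1 / sqrt V * (f x - c))"
  have u_eq: "u = (\<lambda>x. 1 / sqrt V * f x + (- c / sqrt V) * 1)"
    using \<open>0 < V\<close> by (simp add: u_def fun_eq_iff field_simps)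
  have "u \<in> L2 \<nu>" unfolding u_eq by (rule L2_lincomb[OF f L2_const])
  moreover have "(\<integral>x. u x \<partial>\<nu>) = 0"
    using integrable_L2[OF f] prob_space by (simp add: u_def c_def)
  ultimately show "u \<in> H0 \<nu>" by (simp add: H0_def)
  show "(\<integral>x. (u x)\<^sup>2 \<partial>\<nu>) = 1"
    using \<open>0 < V\<close> by (simp add: u_def V power_mult_distrib power_divide)
  show "energy m \<nu> u = energy m \<nu> f / variance_nu \<nu> f"
    using \<open>0 < V\<close> unfolding u_def energy_affine by (simp add: power_divide V_def[symmetric])
qed

lemma spectral_gap_nonpos_imp_unit_sequence:
  assumes "spectral_gap m \<nu> \<le> 0"
  obtains u where "\<And>n. u n \<in> H0 \<nu>" "\<And>n. (\<integral>x. (u n x)\<^sup>2 \<partial>\<nu>) = 1"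
    "(\<lambda>n. energy m \<nu> (u n)) \<longlonglongrightarrow> 0"
proof -
  have "\<exists>u. u \<in> H0 \<nu> \<and> (\<integral>x. (u x)\<^sup>2 \<partial>\<nu>) = 1 \<and> energy m \<nu> u < inverse (Suc n)" for n
  proof -
    have "spectral_gap m \<nu> < ereal (inverse (Suc n))"
      using assms by (rule le_less_trans) simp
    then obtain f where "f \<in> L2 \<nu>" "variance_nu \<nu> f \<noteq> 0"
        "energy m \<nu> f / variance_nu \<nu> f < inverse (Suc n)"
      unfolding spectral_gap_def by (auto simp: INF_less_iff)
    then show ?thesis by (metis H0_normalize)
  qed
  then obtain u where u: "\<And>n. u n \<in> H0 \<nu> \<and> (\<integral>x. (u n x)\<^sup>2 \<partial>\<nu>) = 1 \<and> energy m \<nu> (u n) < inverse (Suc n)"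
    by metis
  have "(\<lambda>n. energy m \<nu> (u n)) \<longlonglongrightarrow> 0"
  proof (rule Lim_null_comparison)
    show "\<forall>\<^sub>F n in sequentially. norm (energy m \<nu> (u n)) \<le> inverse (Suc n)"
      using u by (simp add: energy_nonneg less_imp_le)
  qed (rule LIMSEQ_inverse_real_of_nat)
  with u that show thesis by blast
qed

lemma compact_perturbation_convergent_subseq:
  assumes S: "invertible_op_on \<nu> S" and K: "compact_op_on \<nu> K"
    and split: "\<forall>f\<in>H0 \<nu>. AE x in \<nu>. - laplacian m f x = S f x + K f x"
    and v: "\<And>n. v n \<in> H0 \<nu>" and bounded: "\<And>n. l2norm \<nu> (v n) \<le> B"
    and energy_v: "(\<lambda>n. energy m \<nu> (v n)) \<longlonglongrightarrow> 0"
  obtains r h where "strict_mono r" "h \<in> H0 \<nu>" "(\<lambda>n. \<integral>x. (v (r n) x - h x)\<^sup>2 \<partial>\<nu>) \<longlonglongrightarrow> 0"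
proof -
  obtain R where R: "bounded_op_on \<nu> R" "\<And>f. f \<in> H0 \<nu> \<Longrightarrow> AE x in \<nu>. R (S f) x = f x"
    using S unfolding invertible_op_on_def by blast
  have S_H0: "S f \<in> H0 \<nu>" and K_H0: "K f \<in> H0 \<nu>" and R_H0: "R f \<in> H0 \<nu>" if "f \<in> H0 \<nu>" for f
    using that S K R(1) by (auto simp: invertible_op_on_def compact_op_on_def bounded_op_on_def)
  obtain r g where r: "strict_mono r" and g: "g \<in> H0 \<nu>"
    and Kv_g: "(\<lambda>n. l2norm \<nu> (\<lambda>x. K (v (r n)) x - g x)) \<longlonglongrightarrow> 0"
    using K v bounded unfolding compact_op_on_def by blast
  \<comment> \<open>\<open>w n = S (v (r n)) + g = - \<Delta>\<^sub>m (v (r n)) - (K (v (r n)) - g)\<close> tends to 0, hence so does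
    \<open>R (w n) = v (r n) + R g\<close>; the factors 1 match the linearity clause of \<open>bounded_op_on\<close>.\<close>
  define w where "w n = (\<lambda>x. 1 * S (v (r n)) x + 1 * g x)" for n
  have w: "w n \<in> H0 \<nu>" for n unfolding w_def by (intro H0_lincomb S_H0 v g)
  have "(\<lambda>n. \<integral>x. (w n x)\<^sup>2 \<partial>\<nu>) \<longlonglongrightarrow> 0"
  proof (rule L2_tendsto_0_if_laplacian_split[where f="\<lambda>n. v (r n)"])
    show "AE x in \<nu>. - laplacian m (v (r n)) x = w n x + (K (v (r n)) x - g x)" for n
      using split v by (auto simp: w_def elim!: eventually_mono)
    show "(\<lambda>n. energy m \<nu> (v (r n))) \<longlonglongrightarrow> 0"
      using LIMSEQ_subseq_LIMSEQ[OF energy_v r] by (simp add: comp_def)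
    show "(\<lambda>n. \<integral>x. (K (v (r n)) x - g x)\<^sup>2 \<partial>\<nu>) \<longlonglongrightarrow> 0"
      using tendsto_power[OF Kv_g, of 2] by (simp add: l2norm_square)
  qed (auto intro: H0_L2 w v K_H0 g L2_diff)
  then have R_w: "(\<lambda>n. \<integral>x. (R (w n) x)\<^sup>2 \<partial>\<nu>) \<longlonglongrightarrow> 0"
    by (rule bounded_op_on_tendsto_0[OF R(1) w])
  have "AE x in \<nu>. R (w n) x = v (r n) x - (- R g x)" for n
  proof -
    have "AE x in \<nu>. R (w n) x = 1 * R (S (v (r n))) x + 1 * R g x"
      using R(1) S_H0[OF v] g unfolding w_def bounded_op_on_def by blast
    with R(2)[OF v] show ?thesis by eventually_elim simp
  qed
  then have "(\<integral>x. (R (w n) x)\<^sup>2 \<partial>\<nu>) = (\<integral>x. (v (r n) x - (- R g x))\<^sup>2 \<partial>\<nu>)" for n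
    by (intro integral_square_cong_AE L2_diff L2_uminus H0_L2 R_H0 w v g)
  with R_w have "(\<lambda>n. \<integral>x. (v (r n) x - (- R g x))\<^sup>2 \<partial>\<nu>) \<longlonglongrightarrow> 0" by simp
  with r H0_uminus[OF R_H0[OF g]] that show thesis by blast
qed

end

theorem proposition3p5:
  fixes m :: "'a::polish_space \<Rightarrow> 'a measure" and \<nu> :: "'a measure"
  assumes "mrw_space m"
    and "prob_space \<nu>" and "sets \<nu> = sets borel"
    and "invariant_measure m \<nu>" and "reversible_measure m \<nu>"
    and "m_connected m \<nu>"
    and "\<exists>S K. invertible_op_on \<nu> S \<and> compact_op_on \<nu> K \<and>
           (\<forall>f\<in>H0 \<nu>. AE x in \<nu>. - laplacian m f x = S f x + K f x)"
  shows "spectral_gap m \<nu> > 0"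
proof (rule ccontr)
  interpret mrw_invariant_prob_space \<nu> m
    using assms(1-4) by (simp add: mrw_invariant_prob_space_def mrw_invariant_prob_space_axioms_def)
  obtain S K where S: "invertible_op_on \<nu> S" and K: "compact_op_on \<nu> K"
    and split: "\<forall>f\<in>H0 \<nu>. AE x in \<nu>. - laplacian m f x = S f x + K f x"
    using assms(7) by blast
  assume "\<not> spectral_gap m \<nu> > 0"
  then have "spectral_gap m \<nu> \<le> 0" by (simp add: not_less)
  then obtain u where u: "\<And>n. u n \<in> H0 \<nu>" "\<And>n. (\<integral>x. (u n x)\<^sup>2 \<partial>\<nu>) = 1"
    and energy_u: "(\<lambda>n. energy m \<nu> (u n)) \<longlonglongrightarrow> 0"
    using spectral_gap_nonpos_imp_unit_sequence by blast
  have "l2norm \<nu> (u n) \<le> 1" for n by (simp add: l2norm_def u(2))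
  then obtain r h where r: "strict_mono r" and h: "h \<in> H0 \<nu>"
    and u_h: "(\<lambda>n. \<integral>x. (u (r n) x - h x)\<^sup>2 \<partial>\<nu>) \<longlonglongrightarrow> 0"
    using compact_perturbation_convergent_subseq[OF S K split u(1) _ energy_u] by blast
  have "energy m \<nu> h = 0"
    using LIMSEQ_subseq_LIMSEQ[OF energy_u r]
    by (intro energy_eq_0_if_L2_limit[OF H0_L2[OF h] H0_L2[OF u(1)] u_h]) (simp add: comp_def)
  then have "AE x in \<nu>. h x = 0" by (rule H0_energy_eq_0_imp_AE_0[OF assms(6) h])
  then have "(\<integral>x. (u (r n) x - h x)\<^sup>2 \<partial>\<nu>) = (\<integral>x. (u (r n) x)\<^sup>2 \<partial>\<nu>)" for n
    by (intro integral_square_cong_AE L2_diff H0_L2 u(1) h) (auto elim: eventually_mono)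
  with u_h u(2) show False by (simp add: LIMSEQ_const_iff)
qed

end
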